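(* Fix $0<q<1$. Let $G\in\mathcal G$, $G\ne E$, let $X_1,X_2,\dots$ be i.i.d. with cdf $G$, and let $G_n$ be the empirical cdf of $X_1,\dots,X_n$. Then $\lim_{n\to\infty}T_q(G_n)=T_q(G)$ almost surely.
   Context: $E(t)=1-e^{-t}$, $\bar E=1-E$, $\bar G=1-G$. $\mathcal G=\{E\#F:F$ a probability distribution on $[1,\infty)\}$ with $(E\#F)(t)=\int E(t/\mu)\,dF(\mu)$. FDR functional $T_q(G)=\inf\{t:\bar G(t)\ge\frac1q\bar E(t)\}$ (with $\inf\emptyset=+\infty$). Empirical cdf: $G_n(t)=\frac1n\sum_{i=1}^n\mathbb 1\{X_i<t\}$. *)

theory Defs
  imports "HOL-Probability.Probability"
begin

definition Ecdf :: "real \<Rightarrow> real" where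
  "Ecdf t = (if t \<le> 0 then 0 else 1 - exp (- t))"

definition mix :: "real measure \<Rightarrow> real \<Rightarrow> real" where
  "mix F t = (\<integral>\<mu>. Ecdf (t / \<mu>) \<partial>F)"

definition Gcal :: "(real \<Rightarrow> real) set" where
  "Gcal = {G. \<exists>F. prob_space F \<and> sets F = sets borel \<and> measure F {1..} = 1 \<and> G = mix F}"

text \<open>FDR functional, with Inf of the empty set equal to +infinity (in ereal).\<close>
definition Tq :: "real \<Rightarrow> (real \<Rightarrow> real) \<Rightarrow> ereal" where
  "Tq q G = Inf {ereal t | t. 1 - G t \<ge> (1 / q) * (1 - Ecdf t)}"

text \<open>Empirical cdf of X_0, ..., X_(n-1) (the first n observations), with strict inequality.\<close>
definition emp_cdf :: "(nat \<Rightarrow> 'a \<Rightarrow> real) \<Rightarrow> nat \<Rightarrow> 'a \<Rightarrow> real \<Rightarrow> real" where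
  "emp_cdf X n \<omega> t = card {i \<in> {..<n}. X i \<omega> < t} / real n"

end

theory Submission
  imports Defs
begin

text \<open>For \<open>t \<ge> 0\<close> a scale mixture satisfies \<open>1 - G(t) = e\<^sup>-\<^sup>t r(t)\<close> with
  \<open>r(t) = \<integral> exp (t (1 - 1/\<mu>)) dF(\<mu>)\<close>, and \<open>r\<close> is strictly increasing unless \<open>F\<close> is the point mass
  at 1, i.e. unless \<open>G = E\<close>. So the FDR condition reads \<open>r(t) \<ge> 1/q\<close>, it holds strictly just
  to the right of \<open>T\<^sub>q(G)\<close>, and it fails on \<open>[0, T\<^sub>q(G))\<close> with a margin that a finite grid
  controls uniformly. Both facts survive replacing \<open>G\<close> by an empirical cdf that is close to
  \<open>G\<close> at finitely many points, and by the strong law of large numbers (Hoeffding plus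
  Borel-Cantelli) the empirical cdfs almost surely converge to \<open>G\<close> at every rational point.\<close>

lemma Tq_le: "1 / q * (1 - Ecdf t) \<le> 1 - g t \<Longrightarrow> Tq q g \<le> ereal t"
  unfolding Tq_def by (rule Inf_lower) auto

lemma Tq_ge: "(\<And>t. 1 / q * (1 - Ecdf t) \<le> 1 - g t \<Longrightarrow> a \<le> t) \<Longrightarrow> ereal a \<le> Tq q g"
  unfolding Tq_def by (rule Inf_greatest) auto

lemma Tq_lessE:
  assumes "Tq q g < ereal b"
  obtains t where "1 / q * (1 - Ecdf t) \<le> 1 - g t" "t < b"
  using assms unfolding Tq_def by (auto simp: Inf_less_iff)

lemma Ecdf_tail: "0 \<le> t \<Longrightarrow> 1 - Ecdf t = exp (- t)"
  by (simp add: Ecdf_def)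

lemma Tq_condition_pos:
  assumes "q < 1" "0 < q" "0 \<le> g t" "1 / q * (1 - Ecdf t) \<le> 1 - g t"
  shows "0 < t"
proof (rule ccontr)
  assume "\<not> 0 < t"
  then have "1 < 1 / q * (1 - Ecdf t)" using assms(1,2) by (simp add: Ecdf_def)
  with assms(3,4) show False by linarith
qed

lemma grid_bracket:
  assumes "0 < d" "0 < t"
  shows "\<exists>j::nat. real j * d < t \<and> t \<le> real j * d + d"
proof
  define j where "j = nat (\<lceil>t / d\<rceil> - 1)"
  have "1 \<le> \<lceil>t / d\<rceil>" using assms by simp
  then have "real j = \<lceil>t / d\<rceil> - 1" by (simp add: j_def)
  then have "real j < t / d" "t / d \<le> real j + 1" by linarith+
  then show "real j * d < t \<and> t \<le> real j * d + d"
    using assms by (simp add: field_simps)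
qed

context
  fixes q :: real and G r :: "real \<Rightarrow> real"
  assumes q: "0 < q" "q < 1"
    and G_nonneg: "\<And>t. 0 \<le> G t"
    and G_tail: "\<And>t. 0 \<le> t \<Longrightarrow> 1 - G t = exp (- t) * r t"
    and r_strict_mono: "\<And>s t. 0 \<le> s \<Longrightarrow> s < t \<Longrightarrow> r s < r t"
begin

lemma Tq_condition_iff: "1 / q * (1 - Ecdf t) \<le> 1 - G t \<longleftrightarrow> 0 \<le> t \<and> 1 / q \<le> r t"
proof (cases "0 \<le> t")
  case True
  then have "1 / q * (1 - Ecdf t) = exp (- t) * (1 / q)" by (simp add: Ecdf_tail)
  then show ?thesis using G_tail[OF True] True by (simp only: mult_le_cancel_left_pos[OF exp_gt_zero] simp_thms)
next
  case False
  then show ?thesis using Tq_condition_pos[of q G t] q G_nonneg[of t] by auto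
qed

lemma eventually_Tq_less:
  fixes Gn Hn :: "nat \<Rightarrow> real \<Rightarrow> real"
  assumes b: "Tq q G < ereal b"
    and Gn_le_Hn: "\<And>n t. Gn n t \<le> Hn n t"
    and Hn_tendsto: "\<And>x. x \<in> \<rat> \<Longrightarrow> 0 \<le> x \<Longrightarrow> (\<lambda>n. Hn n x) \<longlonglongrightarrow> G x"
  shows "eventually (\<lambda>n. Tq q (Gn n) < ereal b) sequentially"
proof -
  obtain s where s: "0 \<le> s" "1 / q \<le> r s" "s < b"
    using Tq_lessE[OF b] Tq_condition_iff by metis
  obtain u where u: "u \<in> \<rat>" "s < u" "u < b"
    using Rats_dense_in_real[OF \<open>s < b\<close>] by blast
  have "exp (- u) * (1 / q) < exp (- u) * r u"
    using r_strict_mono[OF s(1) u(2)] s(2) by (intro mult_strict_left_mono) auto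
  then have "G u < 1 - exp (- u) / q"
    using G_tail[of u] s u by simp
  with Hn_tendsto[of u] u s have "eventually (\<lambda>n. Hn n u < 1 - exp (- u) / q) sequentially"
    by (intro order_tendstoD) auto
  then show ?thesis
  proof eventually_elim
    case (elim n)
    then have "1 / q * (1 - Ecdf u) \<le> 1 - Gn n u"
      using Gn_le_Hn[of n u] s u by (simp add: Ecdf_tail)
    then have "Tq q (Gn n) \<le> ereal u" by (rule Tq_le)
    also have "ereal u < ereal b" using u by simp
    finally show ?case .
  qed
qed

lemma eventually_tail_below_threshold:
  fixes Gn Hn :: "nat \<Rightarrow> real \<Rightarrow> real"
  assumes a: "0 < a" "r a < 1 / q"
    and Hn_le_Gn: "\<And>n s t. s < t \<Longrightarrow> Hn n s \<le> Gn n t"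
    and Hn_tendsto: "\<And>x. x \<in> \<rat> \<Longrightarrow> 0 \<le> x \<Longrightarrow> (\<lambda>n. Hn n x) \<longlonglongrightarrow> G x"
  shows "eventually (\<lambda>n. \<forall>t\<in>{0<..a}. 1 - Gn n t < exp (- t) / q) sequentially"
proof -
  obtain d where d: "d \<in> \<rat>" "0 < d" "r a < exp (- d) / q"
  proof -
    have "(\<lambda>m. exp (- inverse (Suc m)) / q) \<longlonglongrightarrow> exp (- 0) / q"
      using q by (intro tendsto_intros LIMSEQ_inverse_real_of_nat) simp
    then have "eventually (\<lambda>m. r a < exp (- inverse (Suc m)) / q) sequentially"
      using a by (intro order_tendstoD) auto
    then obtain m where "r a < exp (- inverse (Suc m)) / q"
      by (auto simp: eventually_sequentially)
    then show thesis by (intro that) auto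
  qed
  define J where "J = {j::nat. real j * d < a}"
  have "finite J"
  proof (rule finite_subset)
    show "J \<subseteq> {..nat \<lceil>a / d\<rceil>}"
    proof
      fix j assume "j \<in> J"
      then have "real j < a / d" using d(2) by (simp add: J_def field_simps)
      then show "j \<in> {..nat \<lceil>a / d\<rceil>}" by simp linarith
    qed
  qed simp
  moreover have "eventually (\<lambda>n. 1 - Hn n (j * d) < exp (- (j * d + d)) / q) sequentially"
    if "j \<in> J" for j
  proof -
    have x: "0 \<le> j * d" "j * d < a" using that d(2) by (auto simp: J_def)
    have "1 - G (j * d) = exp (- (j * d)) * r (j * d)" using G_tail x by simp
    also have "\<dots> < exp (- (j * d)) * (exp (- d) / q)"
      using r_strict_mono[OF x] d(3) by (intro mult_strict_left_mono) auto
    also have "\<dots> = exp (- (j * d + d)) / q" by (simp add: exp_add[symmetric])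
    finally have gap: "1 - exp (- (j * d + d)) / q < G (j * d)" by simp
    have "(\<lambda>n. Hn n (j * d)) \<longlonglongrightarrow> G (j * d)" using Hn_tendsto x d(1) by simp
    from order_tendstoD(1)[OF this gap] show ?thesis by eventually_elim simp
  qed
  ultimately have "eventually (\<lambda>n. \<forall>j\<in>J. 1 - Hn n (j * d) < exp (- (j * d + d)) / q) sequentially"
    by (simp add: eventually_ball_finite)
  then show ?thesis
  proof eventually_elim
    case (elim n)
    show ?case
    proof
      fix t assume t: "t \<in> {0<..a}"
      then obtain j :: nat where j: "j * d < t" "t \<le> j * d + d"
        using grid_bracket[OF d(2)] by auto
      then have "j \<in> J" using t by (simp add: J_def)
      have "1 - Gn n t \<le> 1 - Hn n (j * d)" using Hn_le_Gn[OF j(1)] by simp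
      also have "\<dots> < exp (- (j * d + d)) / q" using elim \<open>j \<in> J\<close> by blast
      also have "\<dots> \<le> exp (- t) / q" using j(2) q by (simp add: divide_right_mono)
      finally show "1 - Gn n t < exp (- t) / q" .
    qed
  qed
qed

lemma eventually_Tq_ge:
  fixes Gn Hn :: "nat \<Rightarrow> real \<Rightarrow> real"
  assumes a: "ereal a < Tq q G"
    and Gn_nonneg: "\<And>n t. 0 \<le> Gn n t"
    and Hn_le_Gn: "\<And>n s t. s < t \<Longrightarrow> Hn n s \<le> Gn n t"
    and Hn_tendsto: "\<And>x. x \<in> \<rat> \<Longrightarrow> 0 \<le> x \<Longrightarrow> (\<lambda>n. Hn n x) \<longlonglongrightarrow> G x"
  shows "eventually (\<lambda>n. ereal a \<le> Tq q (Gn n)) sequentially"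
proof (cases "0 < a")
  case False
  have "ereal a \<le> Tq q (Gn n)" for n
  proof (rule Tq_ge)
    fix t assume t: "1 / q * (1 - Ecdf t) \<le> 1 - Gn n t"
    have "0 < t" by (rule Tq_condition_pos[of q "Gn n"]) (use q Gn_nonneg t in auto)
    with False show "a \<le> t" by simp
  qed
  then show ?thesis by simp
next
  case True
  have "r a < 1 / q"
  proof (rule ccontr)
    assume "\<not> r a < 1 / q"
    then have "Tq q G \<le> ereal a" using True by (intro Tq_le iffD2[OF Tq_condition_iff]) simp
    with a show False by simp
  qed
  with True have
    "eventually (\<lambda>n. \<forall>t\<in>{0<..a}. 1 - Gn n t < exp (- t) / q) sequentially"
    using Hn_le_Gn Hn_tendsto by (rule eventually_tail_below_threshold)
  then show ?thesis
  proof eventually_elim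
    case (elim n)
    show ?case
    proof (rule Tq_ge)
      fix t assume t: "1 / q * (1 - Ecdf t) \<le> 1 - Gn n t"
      have "0 < t" by (rule Tq_condition_pos[of q "Gn n"]) (use q Gn_nonneg t in auto)
      show "a \<le> t"
      proof (rule ccontr)
        assume "\<not> a \<le> t"
        with \<open>0 < t\<close> elim have "1 - Gn n t < exp (- t) / q" by simp
        with t \<open>0 < t\<close> show False by (simp add: Ecdf_tail)
      qed
    qed
  qed
qed

text \<open>No growth of \<open>r\<close> is assumed: if \<open>Tq q G = \<infinity>\<close>, the lower bounds alone give divergence.\<close>
lemma Tq_tendsto:
  fixes Gn Hn :: "nat \<Rightarrow> real \<Rightarrow> real"
  assumes Gn_nonneg: "\<And>n t. 0 \<le> Gn n t"
    and Gn_le_Hn: "\<And>n t. Gn n t \<le> Hn n t"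
    and Hn_le_Gn: "\<And>n s t. s < t \<Longrightarrow> Hn n s \<le> Gn n t"
    and Hn_tendsto: "\<And>x. x \<in> \<rat> \<Longrightarrow> 0 \<le> x \<Longrightarrow> (\<lambda>n. Hn n x) \<longlonglongrightarrow> G x"
  shows "(\<lambda>n. Tq q (Gn n)) \<longlonglongrightarrow> Tq q G"
proof (rule order_tendstoI)
  fix y assume "y < Tq q G"
  then obtain a where a: "y < ereal a" "ereal a < Tq q G" using ereal_dense2 by blast
  have "eventually (\<lambda>n. ereal a \<le> Tq q (Gn n)) sequentially"
    using a(2) Gn_nonneg Hn_le_Gn Hn_tendsto by (rule eventually_Tq_ge)
  then show "eventually (\<lambda>n. y < Tq q (Gn n)) sequentially"
    by eventually_elim (use a(1) in auto)
next
  fix y assume "Tq q G < y"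
  then obtain b where b: "Tq q G < ereal b" "ereal b < y" using ereal_dense2 by blast
  have "eventually (\<lambda>n. Tq q (Gn n) < ereal b) sequentially"
    using b(1) Gn_le_Hn Hn_tendsto by (rule eventually_Tq_less)
  then show "eventually (\<lambda>n. Tq q (Gn n) < y) sequentially"
    by eventually_elim (use b(2) in auto)
qed

end

definition tail_factor :: "real measure \<Rightarrow> real \<Rightarrow> real" where
  "tail_factor F t = (\<integral>\<mu>. exp (t * (1 - 1 / \<mu>)) \<partial>F)"

lemma mix_nonneg: "0 \<le> mix F t"
  unfolding mix_def by (rule Bochner_Integration.integral_nonneg) (simp add: Ecdf_def)

context
  fixes F :: "real measure"
  assumes F_prob: "prob_space F"
    and sets_F [measurable_cong]: "sets F = sets borel"
    and AE_ge_1: "AE \<mu> in F. 1 \<le> \<mu>"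
begin

interpretation F: prob_space F by (rule F_prob)

lemma integrable_exp_scaled: "integrable F (\<lambda>\<mu>. exp (t * (1 - 1 / \<mu>)))"
proof (rule F.integrable_const_bound[where B = "exp \<bar>t\<bar>"])
  show "AE \<mu> in F. norm (exp (t * (1 - 1 / \<mu>))) \<le> exp \<bar>t\<bar>"
    using AE_ge_1
  proof eventually_elim
    case (elim \<mu>)
    then have h: "0 \<le> 1 - 1 / \<mu>" "1 - 1 / \<mu> \<le> 1" by simp_all
    have "t * (1 - 1 / \<mu>) \<le> \<bar>t\<bar> * (1 - 1 / \<mu>)" using h by (intro mult_right_mono) auto
    also have "\<dots> \<le> \<bar>t\<bar>" using h by (intro mult_left_le) auto
    finally show ?case by simp
  qed
qed measurable

lemma one_minus_mix: "0 \<le> t \<Longrightarrow> 1 - mix F t = exp (- t) * tail_factor F t"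
proof -
  assume t: "0 \<le> t"
  have "integrable F (\<lambda>\<mu>. Ecdf (t / \<mu>))"
    by (rule F.integrable_const_bound[where B = 1]) (auto simp: Ecdf_def)
  then have "1 - mix F t = (\<integral>\<mu>. 1 - Ecdf (t / \<mu>) \<partial>F)"
    by (simp add: mix_def F.prob_space)
  also have "\<dots> = (\<integral>\<mu>. exp (- t) * exp (t * (1 - 1 / \<mu>)) \<partial>F)"
  proof (rule integral_cong_AE)
    show "AE \<mu> in F. 1 - Ecdf (t / \<mu>) = exp (- t) * exp (t * (1 - 1 / \<mu>))"
      using AE_ge_1
    proof eventually_elim
      case (elim \<mu>)
      then have "1 - Ecdf (t / \<mu>) = exp (- t + t * (1 - 1 / \<mu>))"
        using t by (simp add: Ecdf_tail algebra_simps)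
      then show ?case by (simp only: exp_add)
    qed
  qed (simp_all add: Ecdf_def)
  also have "\<dots> = exp (- t) * tail_factor F t"
    by (simp add: tail_factor_def)
  finally show ?thesis .
qed

lemma mix_eq_Ecdf_if_AE_le_1:
  assumes "AE \<mu> in F. \<mu> \<le> 1"
  shows "mix F = Ecdf"
proof
  fix t
  have "AE \<mu> in F. \<mu> = 1" using assms AE_ge_1 by eventually_elim simp
  then have "mix F t = (\<integral>\<mu>. Ecdf t \<partial>F)"
    unfolding mix_def by (intro integral_cong_AE) (auto simp: Ecdf_def)
  then show "mix F t = Ecdf t" by (simp add: F.prob_space)
qed

lemma tail_factor_strict_mono:
  assumes nondegenerate: "\<not> (AE \<mu> in F. \<mu> \<le> 1)" and "0 \<le> s" "s < t"
  shows "tail_factor F s < tail_factor F t"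
  unfolding tail_factor_def
proof (rule F.integral_less_AE[where A = "{1<..}"])
  show "emeasure F {1<..} \<noteq> 0"
    using nondegenerate AE_not_in[of "{1<..}" F] by (auto simp: null_sets_def not_less)
  have "exp (s * (1 - 1 / \<mu>)) \<le> exp (t * (1 - 1 / \<mu>))" if "1 \<le> \<mu>" for \<mu>
    using that \<open>s < t\<close> by (simp add: mult_right_mono)
  then show "AE \<mu> in F. exp (s * (1 - 1 / \<mu>)) \<le> exp (t * (1 - 1 / \<mu>))"
    using AE_ge_1 by (auto elim: eventually_mono)
  have "s * (1 - 1 / \<mu>) < t * (1 - 1 / \<mu>)" if "1 < \<mu>" for \<mu>
    using that \<open>s < t\<close> by (intro mult_strict_right_mono) auto
  then show "AE \<mu> in F. \<mu> \<in> {1<..} \<longrightarrow> exp (s * (1 - 1 / \<mu>)) \<noteq> exp (t * (1 - 1 / \<mu>))"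
    by (intro AE_I2 impI) (metis exp_less_cancel_iff greaterThan_iff order_less_irrefl)
qed (simp_all add: integrable_exp_scaled)

end

lemma (in prob_space) eventually_average_close_bounded:
  fixes X :: "nat \<Rightarrow> 'a \<Rightarrow> real"
  assumes indep: "indep_vars (\<lambda>_. borel) X UNIV"
    and bounded: "\<And>i. AE x in M. X i x \<in> {a..b}"
    and mean: "\<And>i. expectation (X i) = \<mu>"
    and e: "0 < e"
  shows "AE x in M. eventually (\<lambda>n. \<bar>(\<Sum>i<n. X i x) / n - \<mu>\<bar> < e) sequentially"
proof -
  define b' where "b' = max b (a + 1)"
  define c where "c = exp (- 2 * e\<^sup>2 / (b' - a)\<^sup>2)"
  have c: "0 < c" "c < 1" using e by (auto simp: c_def b'_def)
  define A where "A n = {x\<in>space M. \<bar>(\<Sum>i<Suc n. X i x) - Suc n * \<mu>\<bar> \<ge> Suc n * e}" for n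
  have [measurable]: "random_variable borel (X i)" for i
    using indep by (simp add: indep_vars_def)
  have [measurable]: "A n \<in> events" for n
    unfolding A_def by measurable
  have prob_A: "prob (A n) \<le> 2 * c ^ Suc n" for n
  proof -
    interpret Hoeffding_ineq M "{..<Suc n}" X "\<lambda>_. a" "\<lambda>_. b'" "\<Sum>i<Suc n. expectation (X i)"
    proof unfold_locales
      show "indep_vars (\<lambda>_. borel) X {..<Suc n}"
        by (rule indep_vars_subset[OF indep]) auto
      show "AE x in M. X i x \<in> {a..b'}" for i
        using bounded[of i] by eventually_elim (auto simp: b'_def)
    qed auto
    have "prob (A n) \<le> 2 * exp (- 2 * (Suc n * e)\<^sup>2 / (\<Sum>i<Suc n. (b' - a)\<^sup>2))"
      using Hoeffding_ineq_abs_ge[of "Suc n * e"] e by (simp add: A_def mean b'_def)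
    also have "- 2 * (Suc n * e)\<^sup>2 / (\<Sum>i<Suc n. (b' - a)\<^sup>2) = Suc n * (- 2 * e\<^sup>2 / (b' - a)\<^sup>2)"
      by (simp add: power2_eq_square)
    also have "exp (Suc n * (- 2 * e\<^sup>2 / (b' - a)\<^sup>2)) = c ^ Suc n"
      unfolding c_def by (rule exp_of_nat_mult)
    finally show ?thesis .
  qed
  have "summable (\<lambda>n. prob (A n))"
    by (rule summable_comparison_test[where g="\<lambda>n. 2 * c ^ Suc n"])
       (use prob_A c in \<open>auto intro!: summable_mult summable_geometric summable_Suc_iff[THEN iffD2]\<close>)
  then have "AE x in M. eventually (\<lambda>n. x \<in> space M - A n) sequentially"
    by (intro borel_cantelli_AE1) (auto simp: emeasure_eq_measure)
  then show ?thesis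
  proof eventually_elim
    case (elim x)
    then have "eventually (\<lambda>n. \<bar>(\<Sum>i<Suc n. X i x) / Suc n - \<mu>\<bar> < e) sequentially"
      by eventually_elim (auto simp: A_def abs_minus_commute field_simps)
    then show ?case
      by (subst eventually_sequentially_Suc[symmetric])
  qed
qed

lemma (in prob_space) strong_law_bounded:
  fixes X :: "nat \<Rightarrow> 'a \<Rightarrow> real"
  assumes "indep_vars (\<lambda>_. borel) X UNIV"
    and "\<And>i. AE x in M. X i x \<in> {a..b}"
    and "\<And>i. expectation (X i) = \<mu>"
  shows "AE x in M. (\<lambda>n. (\<Sum>i<n. X i x) / n) \<longlonglongrightarrow> \<mu>"
proof -
  have "AE x in M. \<forall>k. eventually (\<lambda>n. \<bar>(\<Sum>i<n. X i x) / n - \<mu>\<bar> < inverse (Suc k)) sequentially"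
    unfolding AE_all_countable using assms by (intro allI eventually_average_close_bounded) simp_all
  then show ?thesis
  proof eventually_elim
    case (elim x)
    show ?case
    proof (rule tendstoI)
      fix r :: real assume "0 < r"
      then obtain k where k: "inverse (Suc k) < r" using reals_Archimedean by blast
      from elim[rule_format, of k] show "eventually (\<lambda>n. dist ((\<Sum>i<n. X i x) / n) \<mu> < r) sequentially"
        by (rule eventually_mono) (use k in \<open>simp add: dist_real_def\<close>)
    qed
  qed
qed

text \<open>Unlike \<open>emp_cdf\<close>, this counts ties, so that by the strong law it tends to
  \<open>G s = P(X \<le> s)\<close> rather than to \<open>P(X < s)\<close>.\<close>
definition emp_cdf_closed :: "(nat \<Rightarrow> 'a \<Rightarrow> real) \<Rightarrow> nat \<Rightarrow> 'a \<Rightarrow> real \<Rightarrow> real" where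
  "emp_cdf_closed X n \<omega> t = card {i \<in> {..<n}. X i \<omega> \<le> t} / real n"

lemma emp_cdf_nonneg: "0 \<le> emp_cdf X n \<omega> t"
  by (simp add: emp_cdf_def)

lemma emp_cdf_le_closed: "emp_cdf X n \<omega> t \<le> emp_cdf_closed X n \<omega> t"
  unfolding emp_cdf_def emp_cdf_closed_def by (intro divide_right_mono) (auto intro!: card_mono)

lemma emp_cdf_closed_le: "s < t \<Longrightarrow> emp_cdf_closed X n \<omega> s \<le> emp_cdf X n \<omega> t"
  unfolding emp_cdf_def emp_cdf_closed_def by (intro divide_right_mono) (auto intro!: card_mono)

lemma (in prob_space) emp_cdf_closed_tendsto:
  fixes X :: "nat \<Rightarrow> 'a \<Rightarrow> real"
  assumes indep: "indep_vars (\<lambda>_. borel) X UNIV"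
    and cdf_X: "\<And>i. cdf (distr M borel (X i)) = G"
  shows "AE \<omega> in M. (\<lambda>n. emp_cdf_closed X n \<omega> s) \<longlonglongrightarrow> G s"
proof -
  have X_meas [measurable]: "random_variable borel (X i)" for i
    using indep by (simp add: indep_vars_def)
  define Y where "Y i \<omega> = (indicator {..s} (X i \<omega>) :: real)" for i \<omega>
  have "indep_vars (\<lambda>_. borel) Y UNIV"
    unfolding Y_def by (rule indep_vars_compose2[OF indep]) simp
  moreover have "AE \<omega> in M. Y i \<omega> \<in> {0..1}" for i
    by (simp add: Y_def)
  moreover have "expectation (Y i) = G s" for i
  proof -
    have "expectation (Y i) = prob (X i -` {..s} \<inter> space M)"
      unfolding Y_def by (subst indicator_vimage[symmetric]) (simp add: integral_indicator)
    also have "\<dots> = cdf (distr M borel (X i)) s"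
      by (simp add: cdf_def measure_distr)
    finally show ?thesis by (simp add: cdf_X)
  qed
  ultimately have "AE \<omega> in M. (\<lambda>n. (\<Sum>i<n. Y i \<omega>) / n) \<longlonglongrightarrow> G s"
    by (rule strong_law_bounded)
  moreover have "(\<Sum>i<n. Y i \<omega>) = card {i \<in> {..<n}. X i \<omega> \<le> s}" for n \<omega>
    using sum_indicator_eq_card[of "{..<n}" "{i. X i \<omega> \<le> s}"]
    by (simp add: Y_def indicator_def Int_def)
  ultimately show ?thesis
    by (simp add: emp_cdf_closed_def)
qed

theorem corollary4p1:
  fixes M :: "'a measure" and X :: "nat \<Rightarrow> 'a \<Rightarrow> real" and G :: "real \<Rightarrow> real" and q :: real
  assumes "prob_space M"
    and "0 < q" "q < 1"
    and "G \<in> Gcal" "G \<noteq> Ecdf"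
    and "\<And>i. X i \<in> borel_measurable M"
    and "prob_space.indep_vars M (\<lambda>_. borel) X UNIV"
    and "\<And>i. cdf (distr M borel (X i)) = G"
  shows "AE \<omega> in M. (\<lambda>n. Tq q (emp_cdf X n \<omega>)) \<longlonglongrightarrow> Tq q G"
proof -
  interpret prob_space M by fact
  obtain F where F: "prob_space F" "sets F = sets borel" "measure F {1..} = 1"
    and G_def: "G = mix F"
    using assms(4) unfolding Gcal_def by blast
  have AE_ge_1: "AE \<mu> in F. 1 \<le> \<mu>"
    using prob_space.AE_prob_1[OF F(1,3)] by simp
  have nondegenerate: "\<not> (AE \<mu> in F. \<mu> \<le> 1)"
    using mix_eq_Ecdf_if_AE_le_1[OF F(1,2) AE_ge_1] assms(5) G_def by blast
  have "AE \<omega> in M. \<forall>x\<in>\<rat>. (\<lambda>n. emp_cdf_closed X n \<omega> x) \<longlonglongrightarrow> G x"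
    using assms(7,8) by (simp add: AE_ball_countable countable_rat emp_cdf_closed_tendsto)
  then show ?thesis
  proof eventually_elim
    case (elim \<omega>)
    show ?case
      by (rule Tq_tendsto[where r = "tail_factor F" and Hn = "\<lambda>n. emp_cdf_closed X n \<omega>"])
        (use assms(2,3) elim in \<open>simp_all add: G_def mix_nonneg one_minus_mix[OF F(1,2) AE_ge_1]
          tail_factor_strict_mono[OF F(1,2) AE_ge_1 nondegenerate]
          emp_cdf_nonneg emp_cdf_le_closed emp_cdf_closed_le\<close>)
  qed
qed

end
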